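(* Let $H$ be an Abelian group, $X$ a simplicial set, $Z\subset X$ a simplicial subset with inclusion $i$, $j:X\to X/Z$ the quotient, $\beta$ a normalized $H$-valued 2-cocycle on $X/Z$ with associated twisting function $\eta$, and $\eta|_X=\eta\circ j$. Then the sequence \[ \mathrm{sDist}_\eta(X/Z)\xrightarrow{j^*}\mathrm{sDist}_{\eta|_X}(X)\xrightarrow{i^*}\mathrm{sDist}_0(Z) \] is left exact: $j^*$ is injective, and the image of $j^*$ is exactly the set of $p$ with $i^*(p)=\delta^{\varphi_0}$, where $\varphi_0(z)=(0,z)$ is the zero section.
   Context: $R$ is a semiring; $D_R(S)$ = finitely supported $p:S\to R$ summing to 1, applied levelwise to simplicial sets. $N(H)$ is the nerve of $H$ ($N(H)_n=H^n$, standard faces/degeneracies). The twisting function of a normalized 2-cocycle $\beta$ on $Y$ is $\eta_1=0$, $\eta_2=\beta$, $\eta_n(y)=(\beta(d_3\cdots d_ny),\eta_{n-1}(d_1y)-\eta_{n-1}(d_0y))$; $N(H)\times_\eta Y$ has simplices $H^n\times Y_n$, $d_0(g,y)=(d_0g+\eta_n(y),d_0y)$, other maps componentwise. $\mathrm{sDist}_\eta(Y)$ is the set of simplicial maps $p:Y\to D_R(N(H)\times_\eta Y)$ with $p_y$ supported on $N(H)_n\times\{y\}$ for all $y\in Y_n$. $\mathrm{sDist}_0(Z)$ uses the untwisted product $N(H)\times Z$ (note $\eta|_X$ vanishes on $Z$). The maps are $(j^*p)_x(h,x)=p_{j(x)}(h,j(x))$ and $(i^*q)_z(h,z)=q_{i(z)}(h,i(z))$.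 $\delta^{\varphi_0}$ is the delta distribution on the zero section. *)

theory Defs
  imports Main
begin

record 'a sset =
  S  :: "nat \<Rightarrow> 'a set"
  fc :: "nat \<Rightarrow> nat \<Rightarrow> 'a \<Rightarrow> 'a"
  dg :: "nat \<Rightarrow> nat \<Rightarrow> 'a \<Rightarrow> 'a"

definition simplicial_set :: "'a sset \<Rightarrow> bool" where
  "simplicial_set X \<longleftrightarrow>
     (\<forall>n. \<forall>x\<in>S X (Suc n). \<forall>i\<le>Suc n. fc X (Suc n) i x \<in> S X n) \<and>
     (\<forall>n. \<forall>x\<in>S X n. \<forall>i\<le>n. dg X n i x \<in> S X (Suc n)) \<and>
     (\<forall>n. \<forall>x\<in>S X (Suc (Suc n)). \<forall>i j. i < j \<and> j \<le> Suc (Suc n) \<longrightarrow>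
        fc X (Suc n) i (fc X (Suc (Suc n)) j x) = fc X (Suc n) (j - 1) (fc X (Suc (Suc n)) i x)) \<and>
     (\<forall>n. \<forall>x\<in>S X n. \<forall>i j. i \<le> j \<and> j \<le> n \<longrightarrow>
        dg X (Suc n) i (dg X n j x) = dg X (Suc n) (Suc j) (dg X n i x)) \<and>
     (\<forall>n. \<forall>x\<in>S X n. \<forall>i j. j \<le> n \<and> i \<le> Suc n \<longrightarrow>
        fc X (Suc n) i (dg X n j x) =
          (if i < j then dg X (n - 1) (j - 1) (fc X n i x)
           else if i = j \<or> i = Suc j then x
           else dg X (n - 1) j (fc X n (i - 1) x)))"

definition simplicial_subset :: "'a sset \<Rightarrow> (nat \<Rightarrow> 'a set) \<Rightarrow> bool" where
  "simplicial_subset X Zs \<longleftrightarrow>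
     (\<forall>n. Zs n \<subseteq> S X n) \<and>
     (\<forall>n. \<forall>z\<in>Zs (Suc n). \<forall>i\<le>Suc n. fc X (Suc n) i z \<in> Zs n) \<and>
     (\<forall>n. \<forall>z\<in>Zs n. \<forall>i\<le>n. dg X n i z \<in> Zs (Suc n))"

text \<open>The quotient X/Z: all simplices of Z are collapsed to the basepoint (None).
  jm Zs n : X_n -> (X/Z)_n is the quotient map j.\<close>

definition jm :: "(nat \<Rightarrow> 'a set) \<Rightarrow> nat \<Rightarrow> 'a \<Rightarrow> 'a option" where
  "jm Zs n x = (if x \<in> Zs n then None else Some x)"

definition quot :: "'a sset \<Rightarrow> (nat \<Rightarrow> 'a set) \<Rightarrow> 'a option sset" where
  "quot X Zs =
     \<lparr> S = (\<lambda>n. insert None (Some ` (S X n - Zs n))),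
       fc = (\<lambda>n i y. case y of None \<Rightarrow> None | Some x \<Rightarrow> jm Zs (n - 1) (fc X n i x)),
       dg = (\<lambda>n i y. case y of None \<Rightarrow> None | Some x \<Rightarrow> jm Zs (Suc n) (dg X n i x)) \<rparr>"

section \<open>Nerve of an abelian group (N(H)_n = H^n as lists of length n)\<close>

definition nface :: "nat \<Rightarrow> nat \<Rightarrow> 'h::ab_group_add list \<Rightarrow> 'h list" where
  "nface n i g = (if i = 0 then tl g else if i = n then butlast g
                  else take (i - 1) g @ [g ! (i - 1) + g ! i] @ drop (Suc i) g)"

definition ndeg :: "nat \<Rightarrow> 'h::ab_group_add list \<Rightarrow> 'h list" where
  "ndeg i g = take i g @ [0] @ drop i g"

definition normalized_2cocycle :: "'a sset \<Rightarrow> ('a \<Rightarrow> 'h::ab_group_add) \<Rightarrow> bool" where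
  "normalized_2cocycle Y \<beta> \<longleftrightarrow>
     (\<forall>\<sigma>\<in>S Y 3. \<beta> (fc Y 3 0 \<sigma>) - \<beta> (fc Y 3 1 \<sigma>) + \<beta> (fc Y 3 2 \<sigma>) - \<beta> (fc Y 3 3 \<sigma>) = 0) \<and>
     (\<forall>y\<in>S Y 1. \<beta> (dg Y 1 0 y) = 0 \<and> \<beta> (dg Y 1 1 y) = 0)"

fun front2 :: "'a sset \<Rightarrow> nat \<Rightarrow> 'a \<Rightarrow> 'a" where
  "front2 Y n y = (if n \<le> 2 then y else front2 Y (n - 1) (fc Y n n y))"

fun eta :: "('a \<Rightarrow> 'h::ab_group_add) \<Rightarrow> 'a sset \<Rightarrow> nat \<Rightarrow> 'a \<Rightarrow> 'h list" where
  "eta \<beta> Y 0 y = []"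
| "eta \<beta> Y (Suc 0) y = []"
| "eta \<beta> Y (Suc (Suc 0)) y = [\<beta> y]"
| "eta \<beta> Y (Suc (Suc (Suc m))) y =
     \<beta> (front2 Y (Suc (Suc (Suc m))) y) #
       map2 (-) (eta \<beta> Y (Suc (Suc m)) (fc Y (Suc (Suc (Suc m))) 1 y))
                (eta \<beta> Y (Suc (Suc m)) (fc Y (Suc (Suc (Suc m))) 0 y))"

section \<open>Twisted products N(H) x_tau Y\<close>

definition tface :: "(nat \<Rightarrow> 'a \<Rightarrow> 'h::ab_group_add list) \<Rightarrow> 'a sset \<Rightarrow> nat \<Rightarrow> nat
     \<Rightarrow> 'h list \<times> 'a \<Rightarrow> 'h list \<times> 'a" where
  "tface \<tau> Y n i v = (case v of (g, y) \<Rightarrow>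
     (if i = 0 then map2 (+) (nface n 0 g) (\<tau> n y) else nface n i g, fc Y n i y))"

definition tdeg :: "'a sset \<Rightarrow> nat \<Rightarrow> nat \<Rightarrow> 'h::ab_group_add list \<times> 'a \<Rightarrow> 'h list \<times> 'a" where
  "tdeg Y n i v = (case v of (g, y) \<Rightarrow> (ndeg i g, dg Y n i y))"

definition is_dist :: "('b \<Rightarrow> 'r::semiring_1) \<Rightarrow> bool" where
  "is_dist q \<longleftrightarrow> finite {v. q v \<noteq> 0} \<and> sum q {v. q v \<noteq> 0} = 1"

definition push :: "('b \<Rightarrow> 'c) \<Rightarrow> ('b \<Rightarrow> 'r::semiring_1) \<Rightarrow> 'c \<Rightarrow> 'r" where
  "push f q w = sum q {v. q v \<noteq> 0 \<and> f v = w}"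

text \<open>sDist_tau(Y): simplicial maps p : Y -> D_R(N(H) x_tau Y) with p_y supported on
  N(H)_n x {y}; p n y is the distribution p_y for y in Y_n (and 0 off the carrier).\<close>

definition sDist :: "'a sset \<Rightarrow> (nat \<Rightarrow> 'a \<Rightarrow> 'h::ab_group_add list)
     \<Rightarrow> (nat \<Rightarrow> 'a \<Rightarrow> 'h list \<times> 'a \<Rightarrow> 'r::semiring_1) set" where
  "sDist Y \<tau> = {p.
     (\<forall>n y. y \<notin> S Y n \<longrightarrow> p n y = (\<lambda>_. 0)) \<and>
     (\<forall>n. \<forall>y\<in>S Y n. is_dist (p n y) \<and>
          (\<forall>g y'. p n y (g, y') \<noteq> 0 \<longrightarrow> length g = n \<and> y' = y)) \<and>
     (\<forall>n. \<forall>y\<in>S Y (Suc n). \<forall>i\<le>Suc n.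
          p n (fc Y (Suc n) i y) = push (tface \<tau> Y (Suc n) i) (p (Suc n) y)) \<and>
     (\<forall>n. \<forall>y\<in>S Y n. \<forall>i\<le>n.
          p (Suc n) (dg Y n i y) = push (tdeg Y n i) (p n y))}"

definition restr_tw :: "(nat \<Rightarrow> 'a option \<Rightarrow> 'h list) \<Rightarrow> (nat \<Rightarrow> 'a set) \<Rightarrow> nat \<Rightarrow> 'a \<Rightarrow> 'h list" where
  "restr_tw \<tau> Zs n x = \<tau> n (jm Zs n x)"

definition zero_tw :: "nat \<Rightarrow> 'a \<Rightarrow> 'h::ab_group_add list" where
  "zero_tw n z = replicate (n - 1) 0"

definition sub_sset :: "'a sset \<Rightarrow> (nat \<Rightarrow> 'a set) \<Rightarrow> 'a sset" where
  "sub_sset X Zs = X\<lparr>S := Zs\<rparr>"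

definition jstar :: "'a sset \<Rightarrow> (nat \<Rightarrow> 'a set)
    \<Rightarrow> (nat \<Rightarrow> 'a option \<Rightarrow> 'h list \<times> 'a option \<Rightarrow> 'r::semiring_1)
    \<Rightarrow> nat \<Rightarrow> 'a \<Rightarrow> 'h list \<times> 'a \<Rightarrow> 'r" where
  "jstar X Zs p n x = (if x \<in> S X n
      then (\<lambda>(g, x'). if x' = x then p n (jm Zs n x) (g, jm Zs n x) else 0)
      else (\<lambda>_. 0))"

definition istar :: "(nat \<Rightarrow> 'a set) \<Rightarrow> (nat \<Rightarrow> 'a \<Rightarrow> 'h list \<times> 'a \<Rightarrow> 'r::semiring_1)
    \<Rightarrow> nat \<Rightarrow> 'a \<Rightarrow> 'h list \<times> 'a \<Rightarrow> 'r" where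
  "istar Zs q n z = (if z \<in> Zs n
      then (\<lambda>(g, z'). if z' = z then q n z (g, z) else 0)
      else (\<lambda>_. 0))"

definition delta0 :: "(nat \<Rightarrow> 'a set) \<Rightarrow> nat \<Rightarrow> 'a \<Rightarrow> 'h::ab_group_add list \<times> 'a \<Rightarrow> 'r::semiring_1" where
  "delta0 Zs n z = (if z \<in> Zs n
      then (\<lambda>(g, z'). if g = replicate n 0 \<and> z' = z then 1 else 0)
      else (\<lambda>_. 0))"

end

theory Submission imports Defs begin

(* Every q in sDist_eta(X/Z) is the Dirac distribution at the zero section over the basepoint:
   in degree 0 by the support condition, in higher degrees because the basepoint is an iterated
   degeneracy of itself.  Over a simplex j x with x not in Z, j^* merely renames the base point of
   q_(j x) to x.  Hence j^* is injective, and its image consists of the p that are Dirac at the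
   zero section over Z.  Conversely such a p descends to X/Z by renaming base points back;
   compatibility with faces at the basepoint uses eta_n(basepoint) = 0, which follows from
   beta(basepoint) = beta(s_0 basepoint) = 0 by normalization. *)

definition dirac :: "'b \<Rightarrow> 'b \<Rightarrow> 'r::semiring_1" where
  "dirac v0 = (\<lambda>w. if w = v0 then 1 else 0)"

lemma push_nonzeroD:
  assumes "push f q w \<noteq> 0" shows "\<exists>v. q v \<noteq> 0 \<and> f v = w"
proof (rule ccontr)
  assume "\<not> (\<exists>v. q v \<noteq> 0 \<and> f v = w)"
  then have "{v. q v \<noteq> 0 \<and> f v = w} = {}" by blast
  then have "push f q w = 0" unfolding push_def by (simp only: sum.empty)
  with assms show False by contradiction
qed

lemma push_cong: "(\<And>v. q v \<noteq> 0 \<Longrightarrow> a v = b v) \<Longrightarrow> push a q = push b q"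
  unfolding push_def by (intro ext sum.cong) auto

lemma push_id: "(\<And>v. q v \<noteq> 0 \<Longrightarrow> a v = v) \<Longrightarrow> push a q = q"
proof (rule ext)
  fix w assume "\<And>v. q v \<noteq> 0 \<Longrightarrow> a v = v"
  then have "{v. q v \<noteq> 0 \<and> a v = w} = (if q w = 0 then {} else {w})" by auto
  then show "push a q w = q w" unfolding push_def by auto
qed

lemma sum_push_image:
  assumes "finite {v. q v \<noteq> 0}"
  shows "sum (push f q) {u \<in> f ` {v. q v \<noteq> 0}. P u} = sum q {v. q v \<noteq> 0 \<and> P (f v)}"
proof -
  let ?S = "{v. q v \<noteq> 0 \<and> P (f v)}"
  have "finite ?S" using assms by (rule rev_finite_subset) auto
  then have "sum q ?S = sum (\<lambda>u. sum q {x \<in> ?S. f x = u}) (f ` ?S)"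
    by (rule sum.image_gen)
  also have "f ` ?S = {u \<in> f ` {v. q v \<noteq> 0}. P u}" by auto
  also have "sum (\<lambda>u. sum q {x \<in> ?S. f x = u}) {u \<in> f ` {v. q v \<noteq> 0}. P u}
      = sum (push f q) {u \<in> f ` {v. q v \<noteq> 0}. P u}"
    unfolding push_def by (intro sum.cong refl) (auto intro!: sum.cong)
  finally show ?thesis by simp
qed

lemma push_comp:
  assumes "finite {v. q v \<noteq> 0}"
  shows "push a (push b q) = push (a \<circ> b) q"
proof (rule ext)
  fix w
  have "push a (push b q) w = sum (push b q) {u \<in> b ` {v. q v \<noteq> 0}. a u = w}"
    unfolding push_def[of a] using assms
    by (intro sum.mono_neutral_left) (auto dest: push_nonzeroD)
  also have "\<dots> = push (a \<circ> b) q w"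
    unfolding sum_push_image[OF assms] push_def by simp
  finally show "push a (push b q) w = push (a \<circ> b) q w" .
qed

lemma is_dist_push:
  assumes "is_dist q" shows "is_dist (push f q)"
proof -
  have fin: "finite {v. q v \<noteq> 0}" using assms unfolding is_dist_def by simp
  have sub: "{u. push f q u \<noteq> 0} \<subseteq> f ` {v. q v \<noteq> 0}" by (auto dest: push_nonzeroD)
  have "sum (push f q) {u. push f q u \<noteq> 0} = sum (push f q) {u \<in> f ` {v. q v \<noteq> 0}. True}"
    using fin sub by (intro sum.mono_neutral_left) auto
  also have "\<dots> = 1" using assms unfolding sum_push_image[OF fin] is_dist_def by simp
  finally show ?thesis unfolding is_dist_def using fin sub finite_subset by blast
qed

lemma is_dist_dirac: "is_dist (dirac v :: _ \<Rightarrow> 'r::semiring_1)"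
proof -
  have "{u. (dirac v u :: 'r) \<noteq> 0} = {v}" unfolding dirac_def by auto
  then show ?thesis unfolding is_dist_def by (simp add: dirac_def del: Collect_neg_eq)
qed

lemma push_dirac: "push f (dirac v) = (dirac (f v) :: _ \<Rightarrow> 'r::semiring_1)"
proof (rule ext)
  fix w
  have "{u. (dirac v u :: 'r) \<noteq> 0 \<and> f u = w} = (if f v = w then {v} else {})"
    unfolding dirac_def by auto
  then show "push f (dirac v) w = (dirac (f v) w :: 'r)"
    unfolding push_def by (auto simp: dirac_def)
qed

lemma is_dist_supported_singleton_eq_dirac:
  assumes "is_dist q" "\<And>v. q v \<noteq> 0 \<Longrightarrow> v = v0"
  shows "q = dirac v0"
proof -
  have "{v. q v \<noteq> 0} \<subseteq> {v0}" using assms(2) by blast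
  moreover have "{v. q v \<noteq> 0} \<noteq> {}"
    using assms(1) unfolding is_dist_def by (metis sum.empty zero_neq_one)
  ultimately have supp: "{v. q v \<noteq> 0} = {v0}" by blast
  have "q v0 = 1" using assms(1) supp unfolding is_dist_def by simp
  show ?thesis
  proof
    fix w show "q w = dirac v0 w"
      using supp \<open>q v0 = 1\<close> unfolding dirac_def by (cases "w = v0") auto
  qed
qed

lemma push_rebase:
  fixes Q :: "'g \<times> 'y \<Rightarrow> 'r::semiring_1"
  assumes "\<And>v. Q v \<noteq> 0 \<Longrightarrow> snd v = c"
  shows "push (\<lambda>v. (fst v, b)) Q = (\<lambda>(g, b'). if b' = b then Q (g, c) else 0)"
proof (rule ext, clarify)
  fix g b'
  have "Q v \<noteq> 0 \<and> (fst v, b) = (g, b') \<longleftrightarrow> b' = b \<and> Q (g, c) \<noteq> 0 \<and> v = (g, c)"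
    for v
    using assms[of v] by (cases v) auto
  then have "{v. Q v \<noteq> 0 \<and> (fst v, b) = (g, b')}
      = (if b' = b \<and> Q (g, c) \<noteq> 0 then {(g, c)} else {})"
    by auto
  then show "push (\<lambda>v. (fst v, b)) Q (g, b') = (if b' = b then Q (g, c) else 0)"
    unfolding push_def by auto
qed

lemma push_rebase_commute:
  assumes fin: "finite {v. Q v \<noteq> 0}" and supp: "\<And>v. Q v \<noteq> 0 \<Longrightarrow> snd v = c"
    and comm: "\<And>g. (fst (F (g, c)), b) = G (g, a)"
  shows "push (\<lambda>v. (fst v, b)) (push F Q) = push G (push (\<lambda>v. (fst v, a)) Q)"
proof -
  have "push (\<lambda>v. (fst v, b)) (push F Q) = push ((\<lambda>v. (fst v, b)) \<circ> F) Q"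
    by (rule push_comp[OF fin])
  also have "\<dots> = push (G \<circ> (\<lambda>v. (fst v, a))) Q"
  proof (rule push_cong)
    fix v assume "Q v \<noteq> 0"
    then obtain g where "v = (g, c)" using supp[of v] by (cases v) auto
    then show "((\<lambda>v. (fst v, b)) \<circ> F) v = (G \<circ> (\<lambda>v. (fst v, a))) v" using comm by simp
  qed
  also have "\<dots> = push G (push (\<lambda>v. (fst v, a)) Q)"
    by (rule push_comp[OF fin, symmetric])
  finally show ?thesis .
qed

lemma S_quot: "S (quot X Zs) n = insert None (Some ` (S X n - Zs n))"
  by (simp add: quot_def)

lemma fc_quot_None [simp]: "fc (quot X Zs) n i None = None"
  by (simp add: quot_def)

lemma dg_quot_None [simp]: "dg (quot X Zs) n i None = None"
  by (simp add: quot_def)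

lemma fc_quot_Some: "fc (quot X Zs) n i (Some x) = jm Zs (n - 1) (fc X n i x)"
  by (simp add: quot_def)

lemma dg_quot_Some: "dg (quot X Zs) n i (Some x) = jm Zs (Suc n) (dg X n i x)"
  by (simp add: quot_def)

lemma None_in_quot [simp]: "None \<in> S (quot X Zs) n"
  by (simp add: S_quot)

lemma Some_in_quot_iff: "Some x \<in> S (quot X Zs) n \<longleftrightarrow> x \<in> S X n \<and> x \<notin> Zs n"
  by (auto simp: S_quot)

lemma jm_in_quot: "x \<in> S X n \<Longrightarrow> jm Zs n x \<in> S (quot X Zs) n"
  by (simp add: jm_def Some_in_quot_iff)

lemma fc_quot_jm:
  assumes "simplicial_subset X Zs" "i \<le> Suc n"
  shows "fc (quot X Zs) (Suc n) i (jm Zs (Suc n) x) = jm Zs n (fc X (Suc n) i x)"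
  using assms unfolding simplicial_subset_def by (auto simp: jm_def fc_quot_Some)

lemma dg_quot_jm:
  assumes "simplicial_subset X Zs" "i \<le> n"
  shows "dg (quot X Zs) n i (jm Zs n x) = jm Zs (Suc n) (dg X n i x)"
  using assms unfolding simplicial_subset_def by (auto simp: jm_def dg_quot_Some)

lemma simplicial_set_fc_closed:
  assumes "simplicial_set X" "x \<in> S X (Suc n)" "i \<le> Suc n"
  shows "fc X (Suc n) i x \<in> S X n"
proof -
  have "\<forall>n. \<forall>x\<in>S X (Suc n). \<forall>i\<le>Suc n. fc X (Suc n) i x \<in> S X n"
    using assms(1) unfolding simplicial_set_def by (rule conjunct1)
  with assms(2,3) show ?thesis by blast
qed

lemma simplicial_set_dg_closed:
  assumes "simplicial_set X" "x \<in> S X n" "i \<le> n"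
  shows "dg X n i x \<in> S X (Suc n)"
proof -
  have "\<forall>n. \<forall>x\<in>S X n. \<forall>i\<le>n. dg X n i x \<in> S X (Suc n)"
    using assms(1) unfolding simplicial_set_def by (rule conjunct1[OF conjunct2])
  with assms(2,3) show ?thesis by blast
qed

lemma front2_quot_None: "front2 (quot X Zs) n None = None"
  by (induction n) (subst front2.simps; simp del: front2.simps)+

lemma eta_quot_None:
  assumes "normalized_2cocycle (quot X Zs) \<beta>"
  shows "eta \<beta> (quot X Zs) n None = replicate (n - 1) 0"
proof -
  have \<beta>: "\<beta> None = 0"
    using assms unfolding normalized_2cocycle_def by (metis None_in_quot dg_quot_None)
  have "eta \<beta> (quot X Zs) (Suc (Suc m)) None = replicate (Suc m) 0" for m
    by (induction m) (simp_all add: \<beta> front2_quot_None del: front2.simps)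
  then show ?thesis
    by (cases n; cases "n - 1") auto
qed

lemma nface_replicate_zero:
  assumes "i \<le> n"
  shows "nface n i (replicate n (0::'h::ab_group_add)) = replicate (n - 1) 0"
proof (cases "i = 0 \<or> i = n")
  case True
  then show ?thesis unfolding nface_def by (auto simp: butlast_conv_take)
next
  case False
  then have "Suc (i - 1 + (n - Suc i)) = n - 1" using assms by arith
  then have "replicate (i - 1) (0::'h) @ 0 # replicate (n - Suc i) 0 = replicate (n - 1) 0"
    by (metis replicate_Suc replicate_add replicate_app_Cons_same)
  moreover have "i - 1 < n" "i < n" using False assms by auto
  ultimately show ?thesis using False assms unfolding nface_def by simp
qed

lemma ndeg_replicate_zero:
  "i \<le> n \<Longrightarrow> ndeg i (replicate n (0::'h::ab_group_add)) = replicate (Suc n) 0"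
  unfolding ndeg_def by (simp add: replicate_app_Cons_same flip: replicate_add)

lemma tface_eta_quot_None:
  assumes "normalized_2cocycle (quot X Zs) \<beta>" "i \<le> Suc n"
  shows "tface (eta \<beta> (quot X Zs)) (quot X Zs) (Suc n) i (replicate (Suc n) 0, None)
           = (replicate n (0::'h::ab_group_add), None)"
proof -
  have "nface (Suc n) j (replicate (Suc n) (0::'h)) = replicate n 0" if "j \<le> Suc n" for j
    using nface_replicate_zero[OF that] by simp
  moreover have "map2 (+) (replicate n (0::'h)) (replicate n 0) = replicate n 0"
    by (induction n) auto
  ultimately show ?thesis
    using assms(2) by (simp add: tface_def eta_quot_None[OF assms(1)] del: replicate_Suc)
qed

lemma sDistI:
  assumes "\<And>n y. y \<notin> S Y n \<Longrightarrow> p n y = (\<lambda>_. 0)"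
    and "\<And>n y. y \<in> S Y n \<Longrightarrow> is_dist (p n y)"
    and "\<And>n y g y'. y \<in> S Y n \<Longrightarrow> p n y (g, y') \<noteq> 0 \<Longrightarrow> length g = n \<and> y' = y"
    and "\<And>n y i. y \<in> S Y (Suc n) \<Longrightarrow> i \<le> Suc n \<Longrightarrow>
          p n (fc Y (Suc n) i y) = push (tface \<tau> Y (Suc n) i) (p (Suc n) y)"
    and "\<And>n y i. y \<in> S Y n \<Longrightarrow> i \<le> n \<Longrightarrow>
          p (Suc n) (dg Y n i y) = push (tdeg Y n i) (p n y)"
  shows "p \<in> sDist Y \<tau>"
  using assms unfolding sDist_def by blast

lemma sDistD:
  assumes "p \<in> sDist Y \<tau>"
  shows sDist_outside: "\<And>n y. y \<notin> S Y n \<Longrightarrow> p n y = (\<lambda>_. 0)"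
    and sDist_is_dist: "\<And>n y. y \<in> S Y n \<Longrightarrow> is_dist (p n y)"
    and sDist_support: "\<And>n y g y'. y \<in> S Y n \<Longrightarrow> p n y (g, y') \<noteq> 0 \<Longrightarrow> length g = n \<and> y' = y"
    and sDist_fc: "\<And>n y i. y \<in> S Y (Suc n) \<Longrightarrow> i \<le> Suc n \<Longrightarrow>
          p n (fc Y (Suc n) i y) = push (tface \<tau> Y (Suc n) i) (p (Suc n) y)"
    and sDist_dg: "\<And>n y i. y \<in> S Y n \<Longrightarrow> i \<le> n \<Longrightarrow>
          p (Suc n) (dg Y n i y) = push (tdeg Y n i) (p n y)"
  using assms unfolding sDist_def by blast+

lemma sDist_support_snd:
  assumes "p \<in> sDist Y \<tau>" "y \<in> S Y n" "p n y v \<noteq> 0"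
  shows "snd v = y"
  using sDist_support[OF assms(1,2), of "fst v" "snd v"] assms(3) by simp

lemma sDist_finite_support:
  assumes "p \<in> sDist Y \<tau>" "y \<in> S Y n"
  shows "finite {v. p n y v \<noteq> 0}"
  using sDist_is_dist[OF assms] unfolding is_dist_def by blast

lemma sDist_quot_None:
  assumes "q \<in> sDist (quot X Zs) \<tau>"
  shows "q n None = dirac (replicate n 0, None)"
proof (induction n)
  case 0
  show ?case
    using assms sDist_support[OF assms, of None 0]
    by (intro is_dist_supported_singleton_eq_dirac) (auto intro: sDist_is_dist)
next
  case (Suc n)
  have "q (Suc n) None = q (Suc n) (dg (quot X Zs) n 0 None)" by simp
  also have "\<dots> = push (tdeg (quot X Zs) n 0) (q n None)"
    by (rule sDist_dg[OF assms]) simp_all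
  also have "\<dots> = dirac (replicate (Suc n) 0, None)"
    unfolding Suc.IH push_dirac by (simp add: tdeg_def ndeg_replicate_zero)
  finally show ?case .
qed

lemma jstar_eq_push:
  assumes "q \<in> sDist (quot X Zs) \<tau>" "x \<in> S X n"
  shows "jstar X Zs q n x = push (\<lambda>v. (fst v, x)) (q n (jm Zs n x))"
  using assms sDist_support_snd[OF assms(1) jm_in_quot[OF assms(2)]]
  by (simp add: jstar_def push_rebase)

lemma jstar_in_sDist:
  assumes X: "simplicial_set X" and Z: "simplicial_subset X Zs"
    and q: "q \<in> sDist (quot X Zs) \<tau>"
  shows "jstar X Zs q \<in> sDist X (restr_tw \<tau> Zs)"
proof (rule sDistI)
  fix n y assume y: "y \<in> S X n"
  show "is_dist (jstar X Zs q n y)"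
    unfolding jstar_eq_push[OF q y] by (intro is_dist_push sDist_is_dist[OF q] jm_in_quot y)
  fix g y' assume "jstar X Zs q n y (g, y') \<noteq> 0"
  then show "length g = n \<and> y' = y"
    using y sDist_support[OF q jm_in_quot[OF y]] by (auto simp: jstar_def split: if_splits)
next
  fix n y i assume y: "y \<in> S X (Suc n)" and i: "i \<le> Suc n"
  have jy: "jm Zs (Suc n) y \<in> S (quot X Zs) (Suc n)" using jm_in_quot[OF y] .
  have "jstar X Zs q n (fc X (Suc n) i y)
      = push (\<lambda>v. (fst v, fc X (Suc n) i y)) (q n (fc (quot X Zs) (Suc n) i (jm Zs (Suc n) y)))"
    by (simp add: jstar_eq_push[OF q simplicial_set_fc_closed[OF X y i]] fc_quot_jm[OF Z i])
  also have "\<dots> = push (\<lambda>v. (fst v, fc X (Suc n) i y))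
                   (push (tface \<tau> (quot X Zs) (Suc n) i) (q (Suc n) (jm Zs (Suc n) y)))"
    by (simp add: sDist_fc[OF q jy i])
  also have "\<dots> = push (tface (restr_tw \<tau> Zs) X (Suc n) i)
                   (push (\<lambda>v. (fst v, y)) (q (Suc n) (jm Zs (Suc n) y)))"
    by (rule push_rebase_commute[OF sDist_finite_support[OF q jy] sDist_support_snd[OF q jy]])
       (simp_all add: tface_def restr_tw_def)
  also have "\<dots> = push (tface (restr_tw \<tau> Zs) X (Suc n) i) (jstar X Zs q (Suc n) y)"
    by (simp add: jstar_eq_push[OF q y])
  finally show "jstar X Zs q n (fc X (Suc n) i y)
      = push (tface (restr_tw \<tau> Zs) X (Suc n) i) (jstar X Zs q (Suc n) y)" .
next
  fix n y i assume y: "y \<in> S X n" and i: "i \<le> n"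
  have jy: "jm Zs n y \<in> S (quot X Zs) n" using jm_in_quot[OF y] .
  have "jstar X Zs q (Suc n) (dg X n i y)
      = push (\<lambda>v. (fst v, dg X n i y)) (q (Suc n) (dg (quot X Zs) n i (jm Zs n y)))"
    by (simp add: jstar_eq_push[OF q simplicial_set_dg_closed[OF X y i]] dg_quot_jm[OF Z i])
  also have "\<dots> = push (\<lambda>v. (fst v, dg X n i y)) (push (tdeg (quot X Zs) n i) (q n (jm Zs n y)))"
    by (simp add: sDist_dg[OF q jy i])
  also have "\<dots> = push (tdeg X n i) (push (\<lambda>v. (fst v, y)) (q n (jm Zs n y)))"
    by (rule push_rebase_commute[OF sDist_finite_support[OF q jy] sDist_support_snd[OF q jy]])
       (simp_all add: tdeg_def)
  also have "\<dots> = push (tdeg X n i) (jstar X Zs q n y)"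
    by (simp add: jstar_eq_push[OF q y])
  finally show "jstar X Zs q (Suc n) (dg X n i y) = push (tdeg X n i) (jstar X Zs q n y)" .
qed (simp add: jstar_def)

lemma istar_jstar:
  assumes Z: "simplicial_subset X Zs" and q: "q \<in> sDist (quot X Zs) \<tau>"
  shows "istar Zs (jstar X Zs q) = delta0 Zs"
proof (intro ext, clarify)
  fix n z g z'
  show "istar Zs (jstar X Zs q) n z (g, z') = delta0 Zs n z (g, z')"
  proof (cases "z \<in> Zs n")
    case True
    then have "z \<in> S X n" using Z unfolding simplicial_subset_def by blast
    with True show ?thesis
      by (simp add: istar_def delta0_def jstar_def jm_def sDist_quot_None[OF q] dirac_def)
  qed (simp add: istar_def delta0_def)
qed

lemma jstar_inj:
  assumes q1: "q1 \<in> sDist (quot X Zs) \<tau>" and q2: "q2 \<in> sDist (quot X Zs) \<tau>"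
    and eq: "jstar X Zs q1 = jstar X Zs q2"
  shows "q1 = q2"
proof (intro ext, clarify)
  fix n y g y'
  show "q1 n y (g, y') = q2 n y (g, y')"
  proof (cases "y \<in> S (quot X Zs) n")
    case False
    then show ?thesis using sDist_outside[OF q1] sDist_outside[OF q2] by simp
  next
    case yin: True
    show ?thesis
    proof (cases y)
      case None
      then show ?thesis using sDist_quot_None[OF q1] sDist_quot_None[OF q2] by simp
    next
      case (Some x)
      then have x: "x \<in> S X n" "x \<notin> Zs n" using yin by (auto simp: Some_in_quot_iff)
      show ?thesis
      proof (cases "y' = y")
        case False
        then have "q1 n y (g, y') = 0" "q2 n y (g, y') = 0"
          using sDist_support[OF q1 yin, of g y'] sDist_support[OF q2 yin, of g y'] by auto
        then show ?thesis by simp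
      next
        case True
        have "jstar X Zs q1 n x (g, x) = jstar X Zs q2 n x (g, x)" using eq by simp
        then show ?thesis using x True Some by (simp add: jstar_def jm_def)
      qed
    qed
  qed
qed

definition descend :: "'a sset \<Rightarrow> (nat \<Rightarrow> 'a set)
    \<Rightarrow> (nat \<Rightarrow> 'a \<Rightarrow> 'h::ab_group_add list \<times> 'a \<Rightarrow> 'r::semiring_1)
    \<Rightarrow> nat \<Rightarrow> 'a option \<Rightarrow> 'h list \<times> 'a option \<Rightarrow> 'r" where
  "descend X Zs p n y = (if y \<in> S (quot X Zs) n
      then (case y of None \<Rightarrow> dirac (replicate n 0, None)
                    | Some x \<Rightarrow> push (\<lambda>v. (fst v, Some x)) (p n x))
      else (\<lambda>_. 0))"

lemma descend_None: "descend X Zs p n None = dirac (replicate n 0, None)"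
  by (simp add: descend_def)

lemma descend_Some:
  "x \<in> S X n \<Longrightarrow> x \<notin> Zs n \<Longrightarrow>
    descend X Zs p n (Some x) = push (\<lambda>v. (fst v, Some x)) (p n x)"
  by (simp add: descend_def Some_in_quot_iff)

lemma istar_eq_delta0_imp_dirac:
  assumes p: "p \<in> sDist X \<tau>" and ip: "istar Zs p = delta0 Zs"
    and x: "x \<in> S X n" "x \<in> Zs n"
  shows "p n x = dirac (replicate n 0, x)"
proof (rule ext, clarify)
  fix g x'
  show "p n x (g, x') = dirac (replicate n 0, x) (g, x')"
  proof (cases "x' = x")
    case True
    have "istar Zs p n x (g, x) = delta0 Zs n x (g, x)" using ip by simp
    with True x(2) show ?thesis by (simp add: istar_def delta0_def dirac_def)
  next
    case False
    then have "p n x (g, x') = 0" using sDist_support[OF p x(1), of g x'] by auto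
    with False show ?thesis by (simp add: dirac_def)
  qed
qed

lemma descend_jm:
  assumes Z: "simplicial_subset X Zs" and p: "p \<in> sDist X \<tau>" and ip: "istar Zs p = delta0 Zs"
    and x: "x \<in> S X n"
  shows "descend X Zs p n (jm Zs n x) = push (\<lambda>v. (fst v, jm Zs n x)) (p n x)"
proof (cases "x \<in> Zs n")
  case True
  then show ?thesis
    by (simp add: jm_def descend_None istar_eq_delta0_imp_dirac[OF p ip x] push_dirac)
next
  case False
  then show ?thesis using x by (simp add: jm_def descend_Some)
qed

lemma descend_in_sDist:
  assumes X: "simplicial_set X" and Z: "simplicial_subset X Zs"
    and \<beta>: "normalized_2cocycle (quot X Zs) \<beta>"
    and p: "p \<in> sDist X (restr_tw (eta \<beta> (quot X Zs)) Zs)" and ip: "istar Zs p = delta0 Zs"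
  shows "descend X Zs p \<in> sDist (quot X Zs) (eta \<beta> (quot X Zs))"
proof (rule sDistI)
  fix n y assume y: "y \<in> S (quot X Zs) n"
  show "is_dist (descend X Zs p n y)"
    using y by (cases y) (auto simp: descend_None descend_Some Some_in_quot_iff
        intro: is_dist_dirac is_dist_push sDist_is_dist[OF p])
  fix g y' assume nz: "descend X Zs p n y (g, y') \<noteq> 0"
  show "length g = n \<and> y' = y"
  proof (cases y)
    case None
    with nz show ?thesis by (simp add: descend_None dirac_def split: if_splits)
  next
    case (Some x)
    with y have x: "x \<in> S X n" "x \<notin> Zs n" by (auto simp: Some_in_quot_iff)
    with nz Some obtain v where "p n x v \<noteq> 0" "(fst v, Some x) = (g, y')"
      by (auto simp: descend_Some dest: push_nonzeroD)
    with Some show ?thesis using sDist_support[OF p x(1), of "fst v" "snd v"] by auto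
  qed
next
  fix n y i assume y: "y \<in> S (quot X Zs) (Suc n)" and i: "i \<le> Suc n"
  show "descend X Zs p n (fc (quot X Zs) (Suc n) i y)
      = push (tface (eta \<beta> (quot X Zs)) (quot X Zs) (Suc n) i) (descend X Zs p (Suc n) y)"
  proof (cases y)
    case None
    then show ?thesis
      by (simp add: descend_None push_dirac tface_eta_quot_None[OF \<beta> i] del: replicate_Suc)
  next
    case (Some x)
    with y have x: "x \<in> S X (Suc n)" "x \<notin> Zs (Suc n)" by (auto simp: Some_in_quot_iff)
    have "descend X Zs p n (fc (quot X Zs) (Suc n) i y)
        = push (\<lambda>v. (fst v, jm Zs n (fc X (Suc n) i x))) (p n (fc X (Suc n) i x))"
      using Some descend_jm[OF Z p ip simplicial_set_fc_closed[OF X x(1) i]]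
      by (simp add: fc_quot_Some)
    also have "\<dots> = push (\<lambda>v. (fst v, jm Zs n (fc X (Suc n) i x)))
        (push (tface (restr_tw (eta \<beta> (quot X Zs)) Zs) X (Suc n) i) (p (Suc n) x))"
      by (simp add: sDist_fc[OF p x(1) i])
    also have "\<dots> = push (tface (eta \<beta> (quot X Zs)) (quot X Zs) (Suc n) i)
        (push (\<lambda>v. (fst v, Some x)) (p (Suc n) x))"
      by (rule push_rebase_commute[OF sDist_finite_support[OF p x(1)] sDist_support_snd[OF p x(1)]])
         (use x(2) in \<open>simp_all add: tface_def restr_tw_def jm_def fc_quot_Some\<close>)
    finally show ?thesis using Some x by (simp add: descend_Some)
  qed
next
  fix n y i assume y: "y \<in> S (quot X Zs) n" and i: "i \<le> n"
  show "descend X Zs p (Suc n) (dg (quot X Zs) n i y)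
      = push (tdeg (quot X Zs) n i) (descend X Zs p n y)"
  proof (cases y)
    case None
    then show ?thesis
      using i by (simp add: descend_None push_dirac tdeg_def ndeg_replicate_zero del: replicate_Suc)
  next
    case (Some x)
    with y have x: "x \<in> S X n" "x \<notin> Zs n" by (auto simp: Some_in_quot_iff)
    have "descend X Zs p (Suc n) (dg (quot X Zs) n i y)
        = push (\<lambda>v. (fst v, jm Zs (Suc n) (dg X n i x))) (p (Suc n) (dg X n i x))"
      using Some descend_jm[OF Z p ip simplicial_set_dg_closed[OF X x(1) i]]
      by (simp add: dg_quot_Some)
    also have "\<dots> = push (\<lambda>v. (fst v, jm Zs (Suc n) (dg X n i x))) (push (tdeg X n i) (p n x))"
      by (simp add: sDist_dg[OF p x(1) i])
    also have "\<dots> = push (tdeg (quot X Zs) n i) (push (\<lambda>v. (fst v, Some x)) (p n x))"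
      by (rule push_rebase_commute[OF sDist_finite_support[OF p x(1)] sDist_support_snd[OF p x(1)]])
         (simp_all add: tdeg_def dg_quot_Some)
    finally show ?thesis using Some x by (simp add: descend_Some)
  qed
qed (simp add: descend_def)

lemma jstar_descend:
  assumes X: "simplicial_set X" and Z: "simplicial_subset X Zs"
    and \<beta>: "normalized_2cocycle (quot X Zs) \<beta>"
    and p: "p \<in> sDist X (restr_tw (eta \<beta> (quot X Zs)) Zs)" and ip: "istar Zs p = delta0 Zs"
  shows "jstar X Zs (descend X Zs p) = p"
proof (rule ext, rule ext)
  fix n x
  show "jstar X Zs (descend X Zs p) n x = p n x"
  proof (cases "x \<in> S X n")
    case False
    then show ?thesis using sDist_outside[OF p False] by (simp add: jstar_def)
  next
    case True
    have "jstar X Zs (descend X Zs p) n x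
        = push (\<lambda>v. (fst v, x)) (push (\<lambda>v. (fst v, jm Zs n x)) (p n x))"
      using jstar_eq_push[OF descend_in_sDist[OF X Z \<beta> p ip] True] descend_jm[OF Z p ip True]
      by simp
    also have "\<dots> = push ((\<lambda>v. (fst v, x)) \<circ> (\<lambda>v. (fst v, jm Zs n x))) (p n x)"
      by (rule push_comp[OF sDist_finite_support[OF p True]])
    also have "\<dots> = p n x"
      by (rule push_id) (use sDist_support_snd[OF p True] in \<open>auto simp: prod_eq_iff\<close>)
    finally show ?thesis .
  qed
qed

theorem mainTheorem13:
  fixes X :: "'a sset" and Zs :: "nat \<Rightarrow> 'a set"
    and \<beta> :: "'a option \<Rightarrow> 'h::ab_group_add"
  assumes "simplicial_set X"
    and "simplicial_subset X Zs"
    and "normalized_2cocycle (quot X Zs) \<beta>"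
  shows "inj_on (jstar X Zs)
           (sDist (quot X Zs) (eta \<beta> (quot X Zs))
              :: (nat \<Rightarrow> 'a option \<Rightarrow> 'h list \<times> 'a option \<Rightarrow> 'r::semiring_1) set) \<and>
         jstar X Zs ` (sDist (quot X Zs) (eta \<beta> (quot X Zs))
              :: (nat \<Rightarrow> 'a option \<Rightarrow> 'h list \<times> 'a option \<Rightarrow> 'r::semiring_1) set)
         = {p \<in> sDist X (restr_tw (eta \<beta> (quot X Zs)) Zs).
              istar Zs p = (delta0 Zs :: nat \<Rightarrow> 'a \<Rightarrow> 'h list \<times> 'a \<Rightarrow> 'r)}"
proof (intro conjI inj_onI set_eqI iffI)
  fix q1 q2
  assume "q1 \<in> sDist (quot X Zs) (eta \<beta> (quot X Zs))"
    and "q2 \<in> sDist (quot X Zs) (eta \<beta> (quot X Zs))"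
    and "jstar X Zs q1 = jstar X Zs q2"
  then show "q1 = q2" by (rule jstar_inj)
next
  fix p assume "p \<in> jstar X Zs ` sDist (quot X Zs) (eta \<beta> (quot X Zs))"
  then show "p \<in> {p \<in> sDist X (restr_tw (eta \<beta> (quot X Zs)) Zs). istar Zs p = delta0 Zs}"
    using assms(1,2) by (auto intro: jstar_in_sDist istar_jstar)
next
  fix p assume "p \<in> {p \<in> sDist X (restr_tw (eta \<beta> (quot X Zs)) Zs). istar Zs p = delta0 Zs}"
  then have "p = jstar X Zs (descend X Zs p)"
    and "descend X Zs p \<in> sDist (quot X Zs) (eta \<beta> (quot X Zs))"
    using assms by (simp_all add: jstar_descend descend_in_sDist)
  then show "p \<in> jstar X Zs ` sDist (quot X Zs) (eta \<beta> (quot X Zs))" by (rule image_eqI)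
qed

end
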